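(* Fix $\nu\ge1$ and let $\{a_{ij}\},\{b_{jk}\},\{c_{ik}\}\in\mathcal B$ (notation in the context). Let $\{t_{ijk}\}\in\mathcal T(\{a_{ij}\},\{b_{jk}\},\{c_{ik}\})$, with $t^*_{jjj}$ as defined in the context. Then: (a) $a^*_{jj}+b^*_{jj}-t^*_{jjj}\ge 0$ for every $j$; (b) if $a^*_{jj}+b^*_{jj}-t^*_{jjj}=0$ for all $j$, then $a_{ij}+b_{ij}=c_{ij}$ for all $i\ne j$.
   Context: $\mathcal B$ is the set of collections $\{a_{ij}\}$ of nonnegative integers indexed by pairs $i\ne j$ in $\{1,\dots,\nu\}$ such that $\sum_{i:i\ne j}a_{ij}=\sum_{i:i\ne j}a_{ji}$ for every $j$; for such a collection put $a^*_{jj}:=\sum_{i:i\ne j}a_{ji}=\sum_{i:i\ne j}a_{ij}$ (similarly $b^*_{jj}$, $c^*_{jj}$). For $\{a_{ij}\},\{b_{jk}\},\{c_{ik}\}\in\mathcal B$, $\mathcal T(\{a_{ij}\},\{b_{jk}\},\{c_{ik}\})$ is the set of collections $\{t_{ijk}\}$ of nonnegative integers indexed by triples $(i,j,k)\in\{1,\dots,\nu\}^3$ not of the form $(j,j,j)$, such that $\sum_i t_{ijk}=b_{jk}$ for $j\ne k$; $\sum_j t_{ijk}=c_{ik}$ for $i\ne k$; $\sum_k t_{ijk}=a_{ij}$ for $i\ne j$; and for every $j$, $$a^*_{jj}+\sum_{k:k\ne j}t_{jjk}=b^*_{jj}+\sum_{i:i\ne j}t_{ijj}=c^*_{jj}+\sum_{m:m\ne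 j}t_{jmj};$$ this common value is denoted $t^*_{jjj}$. *)

theory Defs
  imports Main
begin

text \<open>Indices range over {1..nu}. A collection {a_ij} (i ~= j) is a function
  nat => nat => nat; its values off the index set are irrelevant.\<close>

definition inB :: "nat \<Rightarrow> (nat \<Rightarrow> nat \<Rightarrow> nat) \<Rightarrow> bool" where
  "inB \<nu> a \<longleftrightarrow> (\<forall>j\<in>{1..\<nu>}.
      (\<Sum>i\<in>{1..\<nu>}-{j}. a i j) = (\<Sum>i\<in>{1..\<nu>}-{j}. a j i))"

definition dstar :: "nat \<Rightarrow> (nat \<Rightarrow> nat \<Rightarrow> nat) \<Rightarrow> nat \<Rightarrow> nat" where
  "dstar \<nu> a j = (\<Sum>i\<in>{1..\<nu>}-{j}. a j i)"

definition inT :: "nat \<Rightarrow> (nat \<Rightarrow> nat \<Rightarrow> nat) \<Rightarrow> (nat \<Rightarrow> nat \<Rightarrow> nat) \<Rightarrow>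
    (nat \<Rightarrow> nat \<Rightarrow> nat) \<Rightarrow> (nat \<Rightarrow> nat \<Rightarrow> nat \<Rightarrow> nat) \<Rightarrow> bool" where
  "inT \<nu> a b c t \<longleftrightarrow>
     (\<forall>j\<in>{1..\<nu>}. \<forall>k\<in>{1..\<nu>}. j \<noteq> k \<longrightarrow> (\<Sum>i\<in>{1..\<nu>}. t i j k) = b j k) \<and>
     (\<forall>i\<in>{1..\<nu>}. \<forall>k\<in>{1..\<nu>}. i \<noteq> k \<longrightarrow> (\<Sum>j\<in>{1..\<nu>}. t i j k) = c i k) \<and>
     (\<forall>i\<in>{1..\<nu>}. \<forall>j\<in>{1..\<nu>}. i \<noteq> j \<longrightarrow> (\<Sum>k\<in>{1..\<nu>}. t i j k) = a i j) \<and>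
     (\<forall>j\<in>{1..\<nu>}.
        dstar \<nu> a j + (\<Sum>k\<in>{1..\<nu>}-{j}. t j j k) = dstar \<nu> b j + (\<Sum>i\<in>{1..\<nu>}-{j}. t i j j) \<and>
        dstar \<nu> b j + (\<Sum>i\<in>{1..\<nu>}-{j}. t i j j) = dstar \<nu> c j + (\<Sum>m\<in>{1..\<nu>}-{j}. t j m j))"

text \<open>t^*_{jjj}, the common value above\<close>
definition tstar :: "nat \<Rightarrow> (nat \<Rightarrow> nat \<Rightarrow> nat) \<Rightarrow> (nat \<Rightarrow> nat \<Rightarrow> nat \<Rightarrow> nat) \<Rightarrow> nat \<Rightarrow> nat" where
  "tstar \<nu> a t j = dstar \<nu> a j + (\<Sum>k\<in>{1..\<nu>}-{j}. t j j k)"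

end

theory Submission
  imports Defs
begin

text \<open>Splitting off the term i = j in b_jk = \<Sum>_i t_ijk shows that
  a*_jj + b*_jj - t*_jjj is the sum of the t_ijk with i \<noteq> j and k \<noteq> j,
  hence nonnegative. If it vanishes for every j, then t_ijk = 0 unless j \<in> {i, k};
  the marginals then reduce to a_ik = t_ikk, b_ik = t_iik and c_ik = t_iik + t_ikk.\<close>

definition defect :: "nat \<Rightarrow> (nat \<Rightarrow> nat \<Rightarrow> nat \<Rightarrow> nat) \<Rightarrow> nat \<Rightarrow> nat" where
  "defect \<nu> t j = (\<Sum>k\<in>{1..\<nu>}-{j}. \<Sum>i\<in>{1..\<nu>}-{j}. t i j k)"

lemma defect_eq_0_iff:
  "defect \<nu> t j = 0 \<longleftrightarrow> (\<forall>i\<in>{1..\<nu>}-{j}. \<forall>k\<in>{1..\<nu>}-{j}. t i j k = 0)"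
  unfolding defect_def by (simp; blast)

lemma dstar_add_dstar_eq_tstar_add_defect:
  assumes "inT \<nu> a b c t" and j: "j \<in> {1..\<nu>}"
  shows "dstar \<nu> a j + dstar \<nu> b j = tstar \<nu> a t j + defect \<nu> t j"
proof -
  have "dstar \<nu> b j = (\<Sum>k\<in>{1..\<nu>}-{j}. \<Sum>i\<in>{1..\<nu>}. t i j k)"
    unfolding dstar_def using assms(1) j by (intro sum.cong) (auto simp: inT_def)
  also have "\<dots> = (\<Sum>k\<in>{1..\<nu>}-{j}. t j j k + (\<Sum>i\<in>{1..\<nu>}-{j}. t i j k))"
    using j by (intro sum.cong refl) (simp add: sum.remove)
  also have "\<dots> = (\<Sum>k\<in>{1..\<nu>}-{j}. t j j k) + defect \<nu> t j"
    unfolding defect_def by (rule sum.distrib)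
  finally show ?thesis
    unfolding tstar_def by simp
qed

lemma inT_marginals_if_middle_vanishes:
  assumes T: "inT \<nu> a b c t"
    and vanish: "\<And>i j k. \<lbrakk>i \<in> {1..\<nu>}; j \<in> {1..\<nu>}; k \<in> {1..\<nu>}; j \<noteq> i; j \<noteq> k\<rbrakk> \<Longrightarrow> t i j k = 0"
    and i: "i \<in> {1..\<nu>}" and k: "k \<in> {1..\<nu>}" and "i \<noteq> k"
  shows "a i k = t i k k" and "b i k = t i i k" and "c i k = t i i k + t i k k"
proof -
  have "a i k = (\<Sum>m\<in>{1..\<nu>}. t i k m)"
    using T i k \<open>i \<noteq> k\<close> by (simp add: inT_def)
  also have "\<dots> = (\<Sum>m\<in>{k}. t i k m)"
    using i k \<open>i \<noteq> k\<close> vanish by (intro sum.mono_neutral_right) auto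
  finally show "a i k = t i k k" by simp
  have "b i k = (\<Sum>m\<in>{1..\<nu>}. t m i k)"
    using T i k \<open>i \<noteq> k\<close> by (simp add: inT_def)
  also have "\<dots> = (\<Sum>m\<in>{i}. t m i k)"
    using i k \<open>i \<noteq> k\<close> vanish by (intro sum.mono_neutral_right) auto
  finally show "b i k = t i i k" by simp
  have "c i k = (\<Sum>m\<in>{1..\<nu>}. t i m k)"
    using T i k \<open>i \<noteq> k\<close> by (simp add: inT_def)
  also have "\<dots> = (\<Sum>m\<in>{i, k}. t i m k)"
    using i k \<open>i \<noteq> k\<close> vanish by (intro sum.mono_neutral_right) auto
  finally show "c i k = t i i k + t i k k"
    using \<open>i \<noteq> k\<close> by simp
qed

theorem lemma3:
  fixes \<nu> :: nat and a b c :: "nat \<Rightarrow> nat \<Rightarrow> nat" and t :: "nat \<Rightarrow> nat \<Rightarrow> nat \<Rightarrow> nat"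
  assumes "\<nu> \<ge> 1"
    and "inB \<nu> a" and "inB \<nu> b" and "inB \<nu> c"
    and "inT \<nu> a b c t"
  shows "(\<forall>j\<in>{1..\<nu>}. int (dstar \<nu> a j) + int (dstar \<nu> b j) - int (tstar \<nu> a t j) \<ge> 0)
     \<and> ((\<forall>j\<in>{1..\<nu>}. int (dstar \<nu> a j) + int (dstar \<nu> b j) - int (tstar \<nu> a t j) = 0) \<longrightarrow>
        (\<forall>i\<in>{1..\<nu>}. \<forall>j\<in>{1..\<nu>}. i \<noteq> j \<longrightarrow> a i j + b i j = c i j))"
proof -
  have gap: "int (dstar \<nu> a j) + int (dstar \<nu> b j) - int (tstar \<nu> a t j) = int (defect \<nu> t j)"
    if "j \<in> {1..\<nu>}" for j
    using dstar_add_dstar_eq_tstar_add_defect[OF assms(5) that] by linarith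
  show ?thesis
  proof (intro conjI impI ballI)
    show "int (dstar \<nu> a j) + int (dstar \<nu> b j) - int (tstar \<nu> a t j) \<ge> 0"
      if "j \<in> {1..\<nu>}" for j
      using gap[OF that] by simp
  next
    fix i k
    assume "\<forall>j\<in>{1..\<nu>}. int (dstar \<nu> a j) + int (dstar \<nu> b j) - int (tstar \<nu> a t j) = 0"
    then have "defect \<nu> t j = 0" if "j \<in> {1..\<nu>}" for j
      using gap that by fastforce
    then have vanish: "t i' j k' = 0"
      if "i' \<in> {1..\<nu>}" "j \<in> {1..\<nu>}" "k' \<in> {1..\<nu>}" "j \<noteq> i'" "j \<noteq> k'" for i' j k'
      using that by (auto simp: defect_eq_0_iff)
    assume "i \<in> {1..\<nu>}" "k \<in> {1..\<nu>}" "i \<noteq> k"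
    from inT_marginals_if_middle_vanishes[OF assms(5) vanish this]
    show "a i k + b i k = c i k" by simp
  qed
qed

end
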